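(* Fix $j\in\{0,\dots,4\}$ and let $r\in\Lambda_j$ be primitive in $\Lambda_j$ with $r^2>0$. Then $r$ is a root of $\Lambda_j$ if and only if either $r^2\in\{1,2\}$, or $r^2\in\{3,6\}$ and $r\in 3\Lambda_j'$, where $\Lambda_j'$ is the dual lattice of $\Lambda_j$.
   Context: Let $\omega=e^{2\pi i/3}$, $\mathcal{E}=\mathbb{Z}[\omega]$, $\theta=\sqrt{-3}$. Let $\Lambda=\mathcal{E}^5$ with Hermitian form $h(x,y)=-x_0\bar y_0+x_1\bar y_1+\dots+x_4\bar y_4$, and write $x\cdot y$ for $h(x,y)$ and $x^2=h(x,x)$. For $j=0,\dots,4$, $\Lambda_j=\mathbb{Z}^{5-j}\oplus\theta\mathbb{Z}^j\subset\mathcal{E}^5$ is the $\mathbb{Z}$-lattice of vectors fixed by the antilinear map $(x_0,\dots,x_4)\mapsto(\bar x_0,\dots,\bar x_{4-j},-\bar x_{5-j},\dots,-\bar x_4)$, with the (real, integral) restriction of $h$. A root of $\Lambda_j$ is a primitive vector $r\in\Lambda_j$ with $r^2>0$ such that the reflection $x\mapsto x-2\frac{x\cdot r}{r^2}r$ preserves $\Lambda_j$. *)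

theory Defs
  imports Complex_Main
begin

text \<open>Vectors of \<open>\<complex>^5\<close> are modelled as functions \<open>nat \<Rightarrow> complex\<close>
  supported on the indices \<open>0..4\<close>.\<close>

definition theta :: complex where
  "theta = \<i> * complex_of_real (sqrt 3)"

definition herm :: "(nat \<Rightarrow> complex) \<Rightarrow> (nat \<Rightarrow> complex) \<Rightarrow> complex" where
  "herm x y = - (x 0 * cnj (y 0)) + (\<Sum>i\<in>{1..4}. x i * cnj (y i))"

definition Lam :: "nat \<Rightarrow> (nat \<Rightarrow> complex) set" where
  "Lam j = {x. (\<forall>i<5 - j. \<exists>n::int. x i = of_int n)
              \<and> (\<forall>i. 5 - j \<le> i \<and> i < 5 \<longrightarrow> (\<exists>n::int. x i = theta * of_int n))
              \<and> (\<forall>i\<ge>5. x i = 0)}"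

text \<open>The real vector space \<open>\<Lambda>_j \<otimes> \<real> = \<real>^(5-j) \<oplus> \<theta>\<real>^j\<close> spanned by \<open>\<Lambda>_j\<close>.\<close>
definition Vspace :: "nat \<Rightarrow> (nat \<Rightarrow> complex) set" where
  "Vspace j = {x. (\<forall>i<5 - j. \<exists>t::real. x i = of_real t)
              \<and> (\<forall>i. 5 - j \<le> i \<and> i < 5 \<longrightarrow> (\<exists>t::real. x i = theta * of_real t))
              \<and> (\<forall>i\<ge>5. x i = 0)}"

definition dual_Lam :: "nat \<Rightarrow> (nat \<Rightarrow> complex) set" where
  "dual_Lam j = {y \<in> Vspace j. \<forall>x\<in>Lam j. \<exists>n::int. herm y x = of_int n}"

definition scal :: "complex \<Rightarrow> (nat \<Rightarrow> complex) \<Rightarrow> (nat \<Rightarrow> complex)" where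
  "scal c x = (\<lambda>i. c * x i)"

definition primitive :: "nat \<Rightarrow> (nat \<Rightarrow> complex) \<Rightarrow> bool" where
  "primitive j r \<longleftrightarrow> r \<in> Lam j \<and> r \<noteq> (\<lambda>_. 0) \<and>
     (\<forall>(n::int) y. y \<in> Lam j \<and> r = scal (of_int n) y \<longrightarrow> n = 1 \<or> n = -1)"

definition reflection :: "(nat \<Rightarrow> complex) \<Rightarrow> (nat \<Rightarrow> complex) \<Rightarrow> (nat \<Rightarrow> complex)" where
  "reflection r x = (\<lambda>i. x i - (2 * herm x r / herm r r) * r i)"

definition is_root :: "nat \<Rightarrow> (nat \<Rightarrow> complex) \<Rightarrow> bool" where
  "is_root j r \<longleftrightarrow> primitive j r \<and> Re (herm r r) > 0 \<and>
     (\<forall>x\<in>Lam j. reflection r x \<in> Lam j)"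

end

theory Submission
  imports Defs
begin

text \<open>Write lattice vectors in integer coordinates \<open>a\<close>, so that \<open>r\<^sup>2 = n\<close> is the integral
  diagonal form with weights \<open>\<plusminus>1\<close> on the \<open>\<int>\<close>-coordinates and \<open>\<plusminus>3\<close> on the \<open>\<theta>\<int>\<close>-coordinates.
  Testing the reflection on the coordinate vectors and using primitivity shows that it preserves
  the lattice iff \<open>n\<close> divides \<open>2 w\<^sub>i a\<^sub>i\<close> for every weight \<open>w\<^sub>i\<close>; since the \<open>a\<^sub>i\<close> are coprime this forces
  \<open>n | 6\<close>, and for \<open>n \<in> {3, 6}\<close> it amounts to \<open>3 | a\<^sub>i\<close> on the \<open>\<int>\<close>-coordinates, which is exactly
  \<open>r/3 \<in> \<Lambda>\<^sub>j'\<close>.\<close>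

lemma theta_mult_self: "theta * theta = -3"
proof -
  have "complex_of_real (sqrt 3) * complex_of_real (sqrt 3) = 3"
    by (simp flip: of_real_mult)
  then show ?thesis
    unfolding theta_def by (simp add: algebra_simps)
qed

lemma cnj_theta: "cnj theta = - theta"
  unfolding theta_def by simp

lemma theta_nonzero: "theta \<noteq> 0"
  unfolding theta_def by simp

definition coord_weight :: "nat \<Rightarrow> nat \<Rightarrow> int" where
  "coord_weight j i = (if i < 5 - j then 1 else 3)"

definition coord_unit :: "nat \<Rightarrow> nat \<Rightarrow> complex" where
  "coord_unit j i = (if i < 5 - j then 1 else theta)"

definition lattice_vec :: "nat \<Rightarrow> (nat \<Rightarrow> int) \<Rightarrow> nat \<Rightarrow> complex" where
  "lattice_vec j c = (\<lambda>i. if i < 5 then coord_unit j i * of_int (c i) else 0)"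

definition herm_sign :: "nat \<Rightarrow> int" where
  "herm_sign i = (if i = 0 then -1 else 1)"

definition gram :: "nat \<Rightarrow> (nat \<Rightarrow> int) \<Rightarrow> (nat \<Rightarrow> int) \<Rightarrow> int" where
  "gram j c d = (\<Sum>i<5. herm_sign i * coord_weight j i * c i * d i)"

definition coord_basis :: "nat \<Rightarrow> nat \<Rightarrow> int" where
  "coord_basis i = (\<lambda>k. if k = i then 1 else 0)"

lemma coord_unit_nonzero: "coord_unit j i \<noteq> 0"
  by (simp add: coord_unit_def theta_nonzero)

lemma coord_unit_mult_cnj: "coord_unit j i * cnj (coord_unit j i) = of_int (coord_weight j i)"
  by (simp add: coord_unit_def coord_weight_def cnj_theta theta_mult_self)

lemma herm_lattice_vec: "herm (lattice_vec j c) (lattice_vec j d) = of_int (gram j c d)"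
proof -
  have "{1..4::nat} = {1,2,3,4}" by auto
  then show ?thesis
    by (simp add: herm_def gram_def lattice_vec_def herm_sign_def coord_unit_mult_cnj
        numeral_eq_Suc lessThan_Suc algebra_simps)
qed

lemma gram_commute: "gram j c d = gram j d c"
  unfolding gram_def by (simp add: ac_simps)

lemma gram_coord_basis_right:
  "i < 5 \<Longrightarrow> gram j a (coord_basis i) = herm_sign i * coord_weight j i * a i"
  by (simp add: gram_def coord_basis_def if_distrib sum.delta cong: if_cong)

lemma herm_scal: "herm (scal k y) x = k * herm y x"
  unfolding herm_def scal_def by (simp add: sum_distrib_left algebra_simps)

lemma lattice_vec_in_Lam: "lattice_vec j c \<in> Lam j"
  unfolding Lam_def lattice_vec_def coord_unit_def by force

lemma Lam_obtain_coords:
  assumes "x \<in> Lam j"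
  obtains c where "x = lattice_vec j c"
proof -
  have "\<exists>n::int. x i = coord_unit j i * of_int n" if "i < 5" for i
    using assms that unfolding Lam_def coord_unit_def
    by (cases "i < 5 - j") auto
  then obtain c where "\<And>i. i < 5 \<Longrightarrow> x i = coord_unit j i * of_int (c i)"
    by metis
  with assms have "x = lattice_vec j c"
    by (auto simp: Lam_def lattice_vec_def)
  then show thesis ..
qed

lemma scal_lattice_vec: "scal (of_int k) (lattice_vec j c) = lattice_vec j (\<lambda>i. k * c i)"
  unfolding scal_def lattice_vec_def coord_unit_def by (auto simp: algebra_simps)

lemma diff_lattice_vec:
  "(\<lambda>i. lattice_vec j c i - lattice_vec j d i) = lattice_vec j (\<lambda>i. c i - d i)"
  unfolding lattice_vec_def coord_unit_def by (auto simp: algebra_simps)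


lemma dvd_if_dvd_mult_coprime_family:
  fixes n p :: int
  assumes n: "n > 0" and dvd: "\<forall>i\<in>I. n dvd p * a i"
    and coprime_family: "\<forall>q>0. (\<forall>i\<in>I. q dvd a i) \<longrightarrow> q = 1"
  shows "n dvd p"
proof -
  define g where "g = gcd n p"
  define n' where "n' = n div g"
  have g: "g > 0" and n_eq: "n = n' * g" and p_eq: "p = (p div g) * g"
    using n by (simp_all add: g_def n'_def)
  have "coprime n' (p div g)"
    using div_gcd_coprime[of n p] n by (simp add: g_def n'_def)
  moreover have "n' dvd (p div g) * a i" if "i \<in> I" for i
    using dvd that g by (subst (asm) n_eq, subst (asm) p_eq) (simp add: mult.assoc mult.left_commute)
  ultimately have "\<forall>i\<in>I. n' dvd a i"
    using coprime_dvd_mult_right_iff by blast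
  moreover have "n' > 0"
    using n g n_eq by (simp add: zero_less_mult_iff)
  ultimately have "n' = 1"
    using coprime_family by blast
  then show ?thesis
    using n_eq by (metis g_def gcd_dvd2 mult_1)
qed

lemma primitive_coords_coprime:
  assumes "primitive j (lattice_vec j a)" "q > 0" "\<forall>i<5. q dvd a i"
  shows "q = 1"
proof -
  have "scal (of_int q) (lattice_vec j (\<lambda>i. a i div q)) = lattice_vec j (\<lambda>i. q * (a i div q))"
    by (rule scal_lattice_vec)
  also have "\<dots> = lattice_vec j a"
    using assms(3) by (auto simp: lattice_vec_def)
  finally have "scal (of_int q) (lattice_vec j (\<lambda>i. a i div q)) = lattice_vec j a" .
  then have "q = 1 \<or> q = -1"
    using assms(1) lattice_vec_in_Lam unfolding primitive_def by metis
  with \<open>q > 0\<close> show "q = 1" by auto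
qed

lemma primitive_fraction_in_Lam_imp_dvd:
  assumes prim: "primitive j (lattice_vec j a)" and n: "n > 0"
    and in_Lam: "scal (of_int p / of_int n) (lattice_vec j a) \<in> Lam j"
  shows "n dvd p"
proof -
  obtain c where c: "scal (of_int p / of_int n) (lattice_vec j a) = lattice_vec j c"
    using in_Lam by (rule Lam_obtain_coords)
  have "\<forall>i\<in>{..<5}. n dvd p * a i"
  proof
    fix i :: nat
    assume "i \<in> {..<5}"
    then have "i < 5" by simp
    have "of_int p / of_int n * (coord_unit j i * of_int (a i)) = coord_unit j i * of_int (c i)"
      using fun_cong[OF c, of i] \<open>i < 5\<close> by (simp add: scal_def lattice_vec_def)
    then have "(of_int (p * a i) :: complex) = of_int (n * c i)"
      using n coord_unit_nonzero[of j i] by (simp add: field_simps)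
    then show "n dvd p * a i"
      by (metis dvd_triv_left of_int_eq_iff)
  qed
  moreover have "\<forall>q>0. (\<forall>i\<in>{..<5}. q dvd a i) \<longrightarrow> q = 1"
    using primitive_coords_coprime[OF prim] by auto
  ultimately show ?thesis
    by (rule dvd_if_dvd_mult_coprime_family[OF n])
qed


lemma reflection_lattice_vec:
  "reflection (lattice_vec j a) (lattice_vec j c) =
     (\<lambda>i. lattice_vec j c i - scal (2 * of_int (gram j c a) / of_int (gram j a a)) (lattice_vec j a) i)"
  by (simp add: reflection_def herm_lattice_vec scal_def)

lemma reflection_coord_basis_in_Lam_imp_dvd:
  assumes prim: "primitive j (lattice_vec j a)" and pos: "gram j a a > 0" and "i < 5"
    and in_Lam: "reflection (lattice_vec j a) (lattice_vec j (coord_basis i)) \<in> Lam j"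
  shows "gram j a a dvd 2 * coord_weight j i * a i"
proof -
  obtain d where d: "reflection (lattice_vec j a) (lattice_vec j (coord_basis i)) = lattice_vec j d"
    using in_Lam by (rule Lam_obtain_coords)
  have "scal (of_int (2 * gram j (coord_basis i) a) / of_int (gram j a a)) (lattice_vec j a)
      = (\<lambda>k. lattice_vec j (coord_basis i) k - lattice_vec j d k)"
    using d[symmetric] by (simp add: reflection_lattice_vec fun_eq_iff)
  also have "\<dots> = lattice_vec j (\<lambda>k. coord_basis i k - d k)"
    by (rule diff_lattice_vec)
  finally have "scal (of_int (2 * gram j (coord_basis i) a) / of_int (gram j a a)) (lattice_vec j a) \<in> Lam j"
    by (simp add: lattice_vec_in_Lam)
  then have "gram j a a dvd 2 * gram j (coord_basis i) a"
    by (rule primitive_fraction_in_Lam_imp_dvd[OF prim pos])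
  then show ?thesis
    using \<open>i < 5\<close> by (cases "i = 0") (simp_all add: gram_commute gram_coord_basis_right herm_sign_def mult.assoc)
qed

lemma reflection_in_Lam_if_dvd:
  assumes pos: "gram j a a > 0" and dvd: "\<forall>i<5. gram j a a dvd 2 * coord_weight j i * a i"
  shows "reflection (lattice_vec j a) (lattice_vec j c) \<in> Lam j"
proof -
  have "2 * gram j c a = (\<Sum>i<5. herm_sign i * c i * (2 * coord_weight j i * a i))"
    by (simp add: gram_def sum_distrib_left ac_simps)
  also have "gram j a a dvd \<dots>"
    using dvd by (intro dvd_sum) simp
  finally obtain k where k: "2 * gram j c a = gram j a a * k" ..
  then have "2 * of_int (gram j c a) = (of_int (gram j a a) * of_int k :: complex)"
    by (metis of_int_mult of_int_numeral)
  then have "2 * of_int (gram j c a) / of_int (gram j a a) = (of_int k :: complex)"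
    using pos by simp
  then have "reflection (lattice_vec j a) (lattice_vec j c) = lattice_vec j (\<lambda>i. c i - k * a i)"
    by (simp add: reflection_lattice_vec scal_lattice_vec diff_lattice_vec)
  then show ?thesis
    by (simp add: lattice_vec_in_Lam)
qed

lemma reflection_preserves_Lam_iff:
  assumes prim: "primitive j (lattice_vec j a)" and pos: "gram j a a > 0"
  shows "(\<forall>x\<in>Lam j. reflection (lattice_vec j a) x \<in> Lam j) \<longleftrightarrow>
           (\<forall>i<5. gram j a a dvd 2 * coord_weight j i * a i)"
proof
  assume "\<forall>x\<in>Lam j. reflection (lattice_vec j a) x \<in> Lam j"
  then show "\<forall>i<5. gram j a a dvd 2 * coord_weight j i * a i"
    using reflection_coord_basis_in_Lam_imp_dvd[OF prim pos] lattice_vec_in_Lam by blast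
next
  assume "\<forall>i<5. gram j a a dvd 2 * coord_weight j i * a i"
  then show "\<forall>x\<in>Lam j. reflection (lattice_vec j a) x \<in> Lam j"
    using reflection_in_Lam_if_dvd[OF pos] by (metis Lam_obtain_coords)
qed


lemma pos_dvd_six_cases:
  fixes n :: int
  assumes "n > 0" "n dvd 6"
  shows "n = 1 \<or> n = 2 \<or> n = 3 \<or> n = 6"
proof -
  have "n \<in> {1..6}"
    using assms zdvd_imp_le[of n 6] by simp
  then have "n \<in> {1, 2, 3, 4, 5, 6}"
    by auto
  with assms(2) show ?thesis
    by auto
qed

lemma dvd_reflection_coeffs_iff:
  fixes n :: int
  assumes n: "n > 0" and coprime_coords: "\<forall>q>0. (\<forall>i\<in>{..<5}. q dvd a i) \<longrightarrow> q = 1"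
  shows "(\<forall>i<5. n dvd 2 * coord_weight j i * a i) \<longleftrightarrow>
           (n = 1 \<or> n = 2) \<or> ((n = 3 \<or> n = 6) \<and> (\<forall>i<5 - j. 3 dvd a i))"
proof
  assume dvd: "\<forall>i<5. n dvd 2 * coord_weight j i * a i"
  have "\<forall>i\<in>{..<5}. n dvd 6 * a i"
  proof
    fix i :: nat
    assume "i \<in> {..<5}"
    then have "n dvd 2 * coord_weight j i * a i"
      using dvd by simp
    moreover have "2 * coord_weight j i * a i dvd 6 * a i"
      by (simp add: coord_weight_def)
    ultimately show "n dvd 6 * a i"
      by (rule dvd_trans)
  qed
  then have "n dvd 6"
    using dvd_if_dvd_mult_coprime_family[OF n _ coprime_coords] by blast
  then have cases: "n = 1 \<or> n = 2 \<or> n = 3 \<or> n = 6"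
    using n pos_dvd_six_cases by blast
  have "3 dvd a i" if "n = 3 \<or> n = 6" "i < 5 - j" for i
  proof -
    have "n dvd 2 * coord_weight j i * a i"
      using dvd \<open>i < 5 - j\<close> by simp
    then have "n dvd 2 * a i"
      using \<open>i < 5 - j\<close> by (simp add: coord_weight_def)
    then have "3 dvd 2 * a i"
      using that(1) by auto
    then show ?thesis
      by presburger
  qed
  with cases show "(n = 1 \<or> n = 2) \<or> ((n = 3 \<or> n = 6) \<and> (\<forall>i<5 - j. 3 dvd a i))"
    by blast
next
  assume "(n = 1 \<or> n = 2) \<or> ((n = 3 \<or> n = 6) \<and> (\<forall>i<5 - j. 3 dvd a i))"
  then consider "n dvd 2" | "n dvd 6" "\<forall>i<5 - j. 3 dvd a i"
    by fastforce
  then show "\<forall>i<5. n dvd 2 * coord_weight j i * a i"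
  proof cases
    case 1
    then show ?thesis
      by (simp add: mult.assoc)
  next
    case 2
    have "6 dvd 2 * coord_weight j i * a i" for i
    proof (cases "i < 5 - j")
      case True
      then have "3 dvd a i"
        using 2(2) by blast
      with True show ?thesis
        by (simp add: coord_weight_def) presburger
    qed (simp add: coord_weight_def)
    with 2(1) show ?thesis
      using dvd_trans by blast
  qed
qed

lemma scal_real_lattice_vec_in_Vspace: "scal (of_real t) (lattice_vec j c) \<in> Vspace j"
  unfolding Vspace_def scal_def lattice_vec_def coord_unit_def
  by (auto intro!: exI[of _ "t * c _"] simp: algebra_simps)

lemma lattice_vec_in_three_dual_iff:
  "(\<exists>y\<in>dual_Lam j. lattice_vec j a = scal 3 y) \<longleftrightarrow> (\<forall>i<5 - j. 3 dvd a i)"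
proof
  assume "\<exists>y\<in>dual_Lam j. lattice_vec j a = scal 3 y"
  then obtain y where y: "y \<in> dual_Lam j" and a: "lattice_vec j a = scal 3 y"
    by blast
  show "\<forall>i<5 - j. 3 dvd a i"
  proof (intro allI impI)
    fix i assume i: "i < 5 - j"
    obtain m :: int where m: "herm y (lattice_vec j (coord_basis i)) = of_int m"
      using y lattice_vec_in_Lam unfolding dual_Lam_def by blast
    have "of_int (gram j a (coord_basis i)) = (3 * of_int m :: complex)"
      using a m by (simp add: herm_scal flip: herm_lattice_vec)
    then have "gram j a (coord_basis i) = 3 * m"
      by (metis of_int_eq_iff of_int_mult of_int_numeral)
    then have "herm_sign i * a i = 3 * m"
      using i by (simp add: gram_coord_basis_right coord_weight_def)
    then show "3 dvd a i"
      by (cases "i = 0") (simp_all add: herm_sign_def, presburger+)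
  qed
next
  assume three_dvd: "\<forall>i<5 - j. 3 dvd a i"
  define y where "y = scal (of_real (1/3)) (lattice_vec j a)"
  have "herm y x \<in> \<int>" if "x \<in> Lam j" for x
  proof -
    obtain c where c: "x = lattice_vec j c"
      using \<open>x \<in> Lam j\<close> by (rule Lam_obtain_coords)
    have "3 dvd gram j a c"
      unfolding gram_def
      using three_dvd by (intro dvd_sum) (auto simp: coord_weight_def)
    then obtain k where "gram j a c = 3 * k" ..
    then have "herm y x = of_int k"
      by (simp add: y_def c herm_scal herm_lattice_vec)
    then show ?thesis
      by simp
  qed
  then have "y \<in> dual_Lam j"
    unfolding dual_Lam_def y_def
    using scal_real_lattice_vec_in_Vspace Ints_cases by blast
  moreover have "lattice_vec j a = scal 3 y"
    by (simp add: y_def scal_def)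
  ultimately show "\<exists>y\<in>dual_Lam j. lattice_vec j a = scal 3 y"
    by blast
qed

theorem lemma5p4:
  fixes j :: nat and r :: "nat \<Rightarrow> complex"
  assumes "j \<le> 4"
    and "primitive j r"
    and "Re (herm r r) > 0"
  shows "is_root j r \<longleftrightarrow>
           (herm r r = 1 \<or> herm r r = 2) \<or>
           ((herm r r = 3 \<or> herm r r = 6) \<and> (\<exists>y\<in>dual_Lam j. r = scal 3 y))"
proof -
  obtain a where r: "r = lattice_vec j a"
    using assms(2) unfolding primitive_def by (metis Lam_obtain_coords)
  define n where "n = gram j a a"
  have herm_rr: "herm r r = of_int n"
    by (simp add: r n_def herm_lattice_vec)
  with assms(3) have pos: "n > 0"
    by simp
  have prim: "primitive j (lattice_vec j a)"
    using assms(2) r by simp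
  have "is_root j r \<longleftrightarrow> (\<forall>x\<in>Lam j. reflection (lattice_vec j a) x \<in> Lam j)"
    using assms r by (simp add: is_root_def)
  also have "\<dots> \<longleftrightarrow> (\<forall>i<5. n dvd 2 * coord_weight j i * a i)"
    using reflection_preserves_Lam_iff[OF prim] pos by (simp add: n_def)
  also have "\<dots> \<longleftrightarrow> (n = 1 \<or> n = 2) \<or> ((n = 3 \<or> n = 6) \<and> (\<forall>i<5 - j. 3 dvd a i))"
    using primitive_coords_coprime[OF prim] by (intro dvd_reflection_coeffs_iff[OF pos]) auto
  also have "\<dots> \<longleftrightarrow> (herm r r = 1 \<or> herm r r = 2) \<or>
           ((herm r r = 3 \<or> herm r r = 6) \<and> (\<exists>y\<in>dual_Lam j. r = scal 3 y))"
    unfolding herm_rr by (simp add: r lattice_vec_in_three_dual_iff)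
  finally show ?thesis .
qed

end
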